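(* Let $\Phi:[a,b]\to\mathbb{C}$ be continuous and nowhere zero. For integers $n,m\ge1$ and $x_0,x\in[a,b]$, $$\big((\Phi X^{(2n-1)})\star X^{(2m)}\big)(x_0,x)=A_{n,m}X^{(2n+2m)}(x_0,x),\qquad \Big(\big(\tfrac{1}{\Phi}\widetilde X^{(2n-1)}\big)\star\widetilde X^{(2m)}\Big)(x_0,x)=A_{n,m}\widetilde X^{(2n+2m)}(x_0,x),$$ $$\big((\Phi X^{(2n-1)})\star X^{(2m-1)}\big)(x_0,x)=B_{n,m}X^{(2n+2m-1)}(x_0,x),\qquad \Big(\big(\tfrac{1}{\Phi}\widetilde X^{(2n-1)}\big)\star\widetilde X^{(2m-1)}\Big)(x_0,x)=B_{n,m}\widetilde X^{(2n+2m-1)}(x_0,x),$$ where $A_{n,m}=\frac{(2n-1)!(2m)!}{(2n+2m)!}$ and $B_{n,m}=\frac{(2n-1)!(2m-1)!}{(2n+2m-1)!}$.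
   Context: For $s,x\in[a,b]$ the $\Phi$-power functions are defined recursively by $X^{(0)}(s,x)\equiv 1$, $\widetilde X^{(0)}(s,x)\equiv 1$ and, for $n\ge 1$, $$X^{(n)}(s,x)=n\int_{s}^x X^{(n-1)}(s,\xi)\,\big(\Phi(\xi)\big)^{(-1)^n}\,d\xi,\qquad \widetilde X^{(n)}(s,x)=n\int_{s}^x \widetilde X^{(n-1)}(s,\xi)\,\Big(\frac{1}{\Phi(\xi)}\Big)^{(-1)^n}\,d\xi.$$ The Volterra composition (of the first type) of two-variable functions is $(f\star g)(x,y)=\int_x^y f(x,\xi)\,g(\xi,y)\,d\xi$. Here $\Phi X^{(k)}$ denotes the two-variable function $(s,x)\mapsto\Phi(x)X^{(k)}(s,x)$ and $\frac1\Phi\widetilde X^{(k)}$ denotes $(s,x)\mapsto\frac{1}{\Phi(x)}\widetilde X^{(k)}(s,x)$. *)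

theory Defs
  imports "HOL-Analysis.Analysis"
begin

definition oint :: "real \<Rightarrow> real \<Rightarrow> (real \<Rightarrow> complex) \<Rightarrow> complex" where
  "oint s x f = (if s \<le> x then integral {s..x} f else - integral {x..s} f)"

fun Xpow :: "(real \<Rightarrow> complex) \<Rightarrow> nat \<Rightarrow> real \<Rightarrow> real \<Rightarrow> complex" where
  "Xpow \<Phi> 0 s x = 1"
| "Xpow \<Phi> (Suc n) s x =
     of_nat (Suc n) * oint s x (\<lambda>\<xi>. Xpow \<Phi> n s \<xi> *
        (if even (Suc n) then \<Phi> \<xi> else 1 / \<Phi> \<xi>))"

definition Xtilde :: "(real \<Rightarrow> complex) \<Rightarrow> nat \<Rightarrow> real \<Rightarrow> real \<Rightarrow> complex" where
  "Xtilde \<Phi> n = Xpow (\<lambda>\<xi>. 1 / \<Phi> \<xi>) n"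

definition volterra :: "(real \<Rightarrow> real \<Rightarrow> complex) \<Rightarrow> (real \<Rightarrow> real \<Rightarrow> complex) \<Rightarrow> real \<Rightarrow> real \<Rightarrow> complex" where
  "volterra f g x y = oint x y (\<lambda>\<xi>. f x \<xi> * g \<xi> y)"

end

(*
  Swapping the order of integration over the triangle between x0 and x (Dirichlet's formula)
  turns the Volterra composition with X^(k+1) into (k+1) times the integral of the composition
  with X^(k), taken against the weight Phi^((-1)^(k+1)). For odd p the power X^(p+1+(k+1)) is
  built with the same weight, since p+1 is even, so induction on k yields the coefficient
  p! k! / (p+1+k)!; the base case k = 0 is the defining recursion of X^(p+1).
*)
theory Submission
  imports Defs
begin

lemma integral_indicator_Icc_continuous:
  fixes g :: "real \<Rightarrow> 'a::euclidean_space"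
  assumes "continuous_on {c..d} g"
  shows "(\<integral>v. indicator {c..d} v *\<^sub>R g v \<partial>lborel) = integral {c..d} g"
  using set_borel_integral_eq_integral(2)[OF borel_integrable_atLeastAtMost'[OF assms]]
  unfolding set_lebesgue_integral_def .

lemma integral_triangle_swap:
  fixes h :: "real \<Rightarrow> real \<Rightarrow> 'a::euclidean_space"
  assumes h: "continuous_on ({p..q}\<times>{p..q}) (\<lambda>(u,v). h u v)"
  shows "integral {p..q} (\<lambda>u. integral {u..q} (h u))
       = integral {p..q} (\<lambda>v. integral {p..v} (\<lambda>u. h u v))"
proof -
  define T where "T = {(u::real,v::real). p \<le> u \<and> u \<le> v \<and> v \<le> q}"
  have T_sub: "T \<subseteq> {p..q}\<times>{p..q}" unfolding T_def by auto
  have "closed T"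
    unfolding T_def case_prod_beta'
    by (intro closed_Collect_conj closed_Collect_le continuous_intros)
  moreover have "bounded T"
    by (rule bounded_subset[OF compact_imp_bounded[OF compact_Times[OF compact_Icc compact_Icc]] T_sub])
  ultimately have "compact T" by (simp add: compact_eq_bounded_closed)
  define f where "f u v = indicator T (u,v) *\<^sub>R h u v" for u v
  have f_int: "integrable (lborel \<Otimes>\<^sub>M lborel) (case_prod f)"
    using borel_integrable_compact[OF \<open>compact T\<close> continuous_on_subset[OF h T_sub]]
    unfolding lborel_prod f_def case_prod_beta' by simp
  have h_fst: "continuous_on {p..q} (h u)" if "u \<in> {p..q}" for u
    by (rule continuous_on_compose2[OF h, of _ "\<lambda>v. (u,v)", simplified])
       (use that in \<open>auto intro!: continuous_intros\<close>)
  have h_snd: "continuous_on {p..q} (\<lambda>u. h u v)" if "v \<in> {p..q}" for v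
    by (rule continuous_on_compose2[OF h, of _ "\<lambda>u. (u,v)", simplified])
       (use that in \<open>auto intro!: continuous_intros\<close>)
  have inner1: "(\<integral>v. f u v \<partial>lborel) = indicator {p..q} u *\<^sub>R integral {u..q} (h u)" for u
  proof (cases "u \<in> {p..q}")
    case True
    then have "f u = (\<lambda>v. indicator {u..q} v *\<^sub>R h u v)"
      unfolding f_def T_def by (auto simp: indicator_def)
    then show ?thesis
      using True integral_indicator_Icc_continuous[OF continuous_on_subset[OF h_fst]] by auto
  next
    case False
    then have "f u = (\<lambda>v. 0)"
      unfolding f_def T_def by (auto simp: indicator_def)
    with False show ?thesis by simp
  qed
  have inner2: "(\<integral>u. f u v \<partial>lborel) = indicator {p..q} v *\<^sub>R integral {p..v} (\<lambda>u. h u v)" for v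
  proof (cases "v \<in> {p..q}")
    case True
    then have "(\<lambda>u. f u v) = (\<lambda>u. indicator {p..v} u *\<^sub>R h u v)"
      unfolding f_def T_def by (auto simp: indicator_def)
    then show ?thesis
      using True integral_indicator_Icc_continuous[OF continuous_on_subset[OF h_snd]] by auto
  next
    case False
    then have "(\<lambda>u. f u v) = (\<lambda>u. 0)"
      unfolding f_def T_def by (auto simp: indicator_def)
    with False show ?thesis by simp
  qed
  have outer1: "set_integrable lborel {p..q} (\<lambda>u. integral {u..q} (h u))"
    using lborel_pair.integrable_fst[OF f_int] unfolding set_integrable_def inner1 .
  have outer2: "set_integrable lborel {p..q} (\<lambda>v. integral {p..v} (\<lambda>u. h u v))"
    using lborel_pair.integrable_snd[OF f_int] unfolding set_integrable_def inner2 .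
  have "integral {p..q} (\<lambda>u. integral {u..q} (h u)) = (\<integral>u. (\<integral>v. f u v \<partial>lborel) \<partial>lborel)"
    unfolding inner1 set_borel_integral_eq_integral(2)[OF outer1, symmetric]
      set_lebesgue_integral_def ..
  also have "\<dots> = (\<integral>v. (\<integral>u. f u v \<partial>lborel) \<partial>lborel)"
    by (rule lborel_pair.Fubini_integral[OF f_int, symmetric])
  also have "\<dots> = integral {p..q} (\<lambda>v. integral {p..v} (\<lambda>u. h u v))"
    unfolding inner2 set_borel_integral_eq_integral(2)[OF outer2, symmetric]
      set_lebesgue_integral_def ..
  finally show ?thesis .
qed

lemma oint_eq_integral_diff: "oint s x f = integral {s..x} f - integral {x..s} f"
  unfolding oint_def by (cases "s < x"; cases "s = x") auto

lemma oint_cmult: "oint s x (\<lambda>t. c * f t) = c * oint s x f"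
  unfolding oint_def by auto

lemma oint_multc: "oint s x (\<lambda>t. f t * c) = oint s x f * c"
  unfolding oint_def by auto

lemma oint_cong:
  assumes "\<And>t. t \<in> {min s x..max s x} \<Longrightarrow> f t = g t"
  shows "oint s x f = oint s x g"
  unfolding oint_def using assms by (auto intro!: integral_cong)

lemma affine_combination_in_interval:
  fixes s x u :: real
  assumes "s \<in> {a..b}" "x \<in> {a..b}" "u \<in> {0..1}"
  shows "s + u * (x - s) \<in> {a..b}"
proof -
  have "(1 - u) *\<^sub>R s + u *\<^sub>R x \<in> {a..b}"
    using assms by (intro convexD) auto
  then show ?thesis by (simp add: algebra_simps)
qed

lemma oint_eq_integral_01:
  assumes f: "continuous_on {a..b} f" and s: "s \<in> {a..b}" and x: "x \<in> {a..b}"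
  shows "oint s x f = integral {0..1} (\<lambda>u. (x - s) *\<^sub>R f (s + u * (x - s)))"
proof -
  have sub: "(\<lambda>u. s + u * (x - s)) ` {0..1} \<subseteq> {a..b}"
    using affine_combination_in_interval[OF s x] by auto
  have "((\<lambda>u. (x - s) *\<^sub>R f (s + u * (x - s))) has_integral
          (integral {s..x} f - integral {x..s} f)) {0..1}"
    by (rule has_integral_substitution_general
          [of "{}" 0 1 "\<lambda>u. s + u * (x - s)" a b f "\<lambda>_. x - s", OF _ _ sub f, simplified])
       (auto intro!: continuous_intros derivative_eq_intros)
  then show ?thesis
    unfolding oint_eq_integral_diff by (rule integral_unique[symmetric])
qed

lemma oint_swap:
  fixes h :: "real \<Rightarrow> real \<Rightarrow> complex"
  assumes h: "continuous_on ({a..b}\<times>{a..b}) (\<lambda>(u,v). h u v)"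
    and x0: "x0 \<in> {a..b}" and x: "x \<in> {a..b}"
  shows "oint x0 x (\<lambda>\<xi>. oint \<xi> x (h \<xi>)) = oint x0 x (\<lambda>t. oint x0 t (\<lambda>\<xi>. h \<xi> t))"
proof (cases "x0 \<le> x")
  case True
  have h': "continuous_on ({x0..x}\<times>{x0..x}) (\<lambda>(u,v). h u v)"
    by (rule continuous_on_subset[OF h]) (use x0 x in auto)
  have "oint x0 x (\<lambda>\<xi>. oint \<xi> x (h \<xi>)) = integral {x0..x} (\<lambda>\<xi>. integral {\<xi>..x} (h \<xi>))"
    and "oint x0 x (\<lambda>t. oint x0 t (\<lambda>\<xi>. h \<xi> t)) = integral {x0..x} (\<lambda>t. integral {x0..t} (\<lambda>\<xi>. h \<xi> t))"
    using True by (auto simp: oint_def intro!: integral_cong)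
  then show ?thesis
    using integral_triangle_swap[OF h'] by simp
next
  case False
  have h': "continuous_on ({x..x0}\<times>{x..x0}) (\<lambda>(u,v). h v u)"
    unfolding case_prod_beta'
    by (rule continuous_on_compose2[OF h, of _ "\<lambda>z. (snd z, fst z)", simplified])
       (use x0 x in \<open>auto intro!: continuous_intros\<close>)
  have "integral {x..x0} (\<lambda>\<xi>. oint \<xi> x (h \<xi>)) = integral {x..x0} (\<lambda>\<xi>. - integral {x..\<xi>} (h \<xi>))"
    and "integral {x..x0} (\<lambda>t. oint x0 t (\<lambda>\<xi>. h \<xi> t)) = integral {x..x0} (\<lambda>t. - integral {t..x0} (\<lambda>\<xi>. h \<xi> t))"
    by (auto simp: oint_def simp del: integral_neg intro!: integral_cong)
  with False show ?thesis
    using integral_triangle_swap[OF h'] by (simp add: oint_def)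
qed

definition Xpow_weight :: "(real \<Rightarrow> complex) \<Rightarrow> nat \<Rightarrow> real \<Rightarrow> complex" where
  "Xpow_weight \<Phi> j \<xi> = (if even j then \<Phi> \<xi> else 1 / \<Phi> \<xi>)"

lemma Xpow_Suc_weight:
  "Xpow \<Phi> (Suc k) s x = of_nat (Suc k) * oint s x (\<lambda>\<xi>. Xpow \<Phi> k s \<xi> * Xpow_weight \<Phi> (Suc k) \<xi>)"
  by (simp add: Xpow_weight_def)

declare Xpow.simps(2) [simp del]

lemma continuous_on_Xpow_weight:
  assumes "continuous_on {a..b} \<Phi>" "\<forall>t\<in>{a..b}. \<Phi> t \<noteq> 0"
  shows "continuous_on {a..b} (Xpow_weight \<Phi> j)"
  unfolding Xpow_weight_def using assms by (cases "even j") (auto intro!: continuous_intros)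

lemma continuous_on_Xpow:
  assumes \<Phi>: "continuous_on {a..b} \<Phi>" and nz: "\<forall>t\<in>{a..b}. \<Phi> t \<noteq> 0"
  shows "continuous_on ({a..b}\<times>{a..b}) (\<lambda>(s,x). Xpow \<Phi> k s x)"
proof (induction k)
  case 0
  show ?case by simp
next
  case (Suc k)
  define K where "K = (\<lambda>(s,\<xi>). Xpow \<Phi> k s \<xi> * Xpow_weight \<Phi> (Suc k) \<xi>)"
  have K: "continuous_on ({a..b}\<times>{a..b}) K"
    using Suc.IH unfolding K_def case_prod_beta'
    by (intro continuous_intros continuous_on_compose2[OF continuous_on_Xpow_weight[OF \<Phi> nz]]) auto
  \<comment> \<open>Substituting \<open>\<xi> = s + u (x - s)\<close> fixes the range of integration, so that continuity
      in the parameters \<open>(s, x)\<close> follows from \<open>integral_continuous_on_param\<close>.\<close>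
  define I where "I s x = integral {0..1} (\<lambda>u. (x - s) *\<^sub>R K (s, s + u * (x - s)))" for s x
  have "continuous_on (({a..b}\<times>{a..b}) \<times> cbox 0 1)
          (\<lambda>(z,u). (snd z - fst z) *\<^sub>R K (fst z, fst z + u * (snd z - fst z)))"
    unfolding case_prod_beta'
    by (intro continuous_intros continuous_on_compose2[OF K])
       (use affine_combination_in_interval in \<open>auto simp del: atLeastAtMost_iff\<close>)
  from integral_continuous_on_param[OF this]
  have "continuous_on ({a..b}\<times>{a..b}) (\<lambda>(s,x). I s x)"
    unfolding I_def case_prod_beta' cbox_interval .
  then have cont: "continuous_on ({a..b}\<times>{a..b}) (\<lambda>(s,x). of_nat (Suc k) * I s x)"
    unfolding case_prod_beta' by (rule continuous_on_mult_left)
  have eq: "Xpow \<Phi> (Suc k) s x = of_nat (Suc k) * I s x" if "s \<in> {a..b}" "x \<in> {a..b}" for s x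
  proof -
    have "continuous_on {a..b} (\<lambda>\<xi>. K (s,\<xi>))"
      by (rule continuous_on_compose2[OF K]) (use that in \<open>auto intro!: continuous_intros\<close>)
    from oint_eq_integral_01[OF this that] show ?thesis
      unfolding Xpow_Suc_weight I_def by (simp add: K_def)
  qed
  show ?case
    by (rule continuous_on_eq[OF cont]) (auto simp: eq)
qed

lemma continuous_on_Xpow_right:
  assumes "continuous_on {a..b} \<Phi>" "\<forall>t\<in>{a..b}. \<Phi> t \<noteq> 0" and s: "s \<in> {a..b}"
  shows "continuous_on {a..b} (Xpow \<Phi> k s)"
  by (rule continuous_on_compose2[OF continuous_on_Xpow[OF assms(1,2)], of _ "\<lambda>x. (s,x)", simplified])
     (use s in \<open>auto intro!: continuous_intros\<close>)

lemma volterra_Xpow_0: "volterra F (Xpow \<Phi> 0) x0 x = oint x0 x (F x0)"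
  by (simp add: volterra_def)

lemma volterra_Xpow_Suc:
  assumes \<Phi>: "continuous_on {a..b} \<Phi>" and nz: "\<forall>t\<in>{a..b}. \<Phi> t \<noteq> 0"
    and F: "continuous_on {a..b} (F x0)" and x0: "x0 \<in> {a..b}" and x: "x \<in> {a..b}"
  shows "volterra F (Xpow \<Phi> (Suc k)) x0 x
       = of_nat (Suc k) * oint x0 x (\<lambda>t. volterra F (Xpow \<Phi> k) x0 t * Xpow_weight \<Phi> (Suc k) t)"
proof -
  define h where "h \<xi> t = F x0 \<xi> * Xpow \<Phi> k \<xi> t * Xpow_weight \<Phi> (Suc k) t" for \<xi> t
  have h: "continuous_on ({a..b}\<times>{a..b}) (\<lambda>(\<xi>,t). h \<xi> t)"
    using continuous_on_Xpow[OF \<Phi> nz, of k] unfolding h_def case_prod_beta'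
    by (intro continuous_intros continuous_on_compose2[OF F]
        continuous_on_compose2[OF continuous_on_Xpow_weight[OF \<Phi> nz]]) auto
  have "volterra F (Xpow \<Phi> (Suc k)) x0 x = oint x0 x (\<lambda>\<xi>. of_nat (Suc k) * oint \<xi> x (h \<xi>))"
    unfolding volterra_def h_def Xpow_Suc_weight
    by (simp add: oint_cmult[symmetric] mult.assoc mult.left_commute)
  also have "\<dots> = of_nat (Suc k) * oint x0 x (\<lambda>\<xi>. oint \<xi> x (h \<xi>))"
    by (rule oint_cmult)
  also have "oint x0 x (\<lambda>\<xi>. oint \<xi> x (h \<xi>)) = oint x0 x (\<lambda>t. oint x0 t (\<lambda>\<xi>. h \<xi> t))"
    by (rule oint_swap[OF h x0 x])
  also have "\<dots> = oint x0 x (\<lambda>t. volterra F (Xpow \<Phi> k) x0 t * Xpow_weight \<Phi> (Suc k) t)"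
    unfolding volterra_def h_def by (simp add: oint_multc[symmetric] mult.assoc)
  finally show ?thesis .
qed

lemma fact_quotient_Suc:
  "real (Suc k) * (fact p * fact k / fact (p + 1 + k))
   = fact p * fact (Suc k) / fact (p + 1 + Suc k) * real (Suc (p + 1 + k))"
  by (simp add: field_simps del: of_nat_Suc)

lemma volterra_weighted_Xpow_Xpow:
  assumes \<Phi>: "continuous_on {a..b} \<Phi>" and nz: "\<forall>t\<in>{a..b}. \<Phi> t \<noteq> 0"
    and p: "odd p" and x0: "x0 \<in> {a..b}" and x: "x \<in> {a..b}"
  shows "volterra (\<lambda>s y. \<Phi> y * Xpow \<Phi> p s y) (Xpow \<Phi> k) x0 x
       = of_real (fact p * fact k / fact (p + 1 + k)) * Xpow \<Phi> (p + 1 + k) x0 x"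
  using x
proof (induction k arbitrary: x)
  case 0
  have "fact p * fact 0 / fact (p + 1 + 0) * real (Suc p) = 1"
    by (simp add: fact_Suc del: of_nat_Suc)
  from arg_cong[OF this, of complex_of_real]
  have "of_real (fact p * fact 0 / fact (p + 1 + 0)) * of_nat (Suc p) = (1::complex)"
    by (simp only: of_real_mult of_real_of_nat_eq of_real_1)
  moreover have "Xpow \<Phi> (p + 1 + 0) x0 x = of_nat (Suc p) * oint x0 x (\<lambda>y. \<Phi> y * Xpow \<Phi> p x0 y)"
    using p by (simp add: Xpow_Suc_weight Xpow_weight_def mult.commute)
  ultimately show ?case
    unfolding volterra_Xpow_0 by (simp add: mult.assoc[symmetric])
next
  case (Suc k)
  let ?c = "\<lambda>k. of_real (fact p * fact k / fact (p + 1 + k)) :: complex"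
  have F: "continuous_on {a..b} (\<lambda>y. \<Phi> y * Xpow \<Phi> p x0 y)"
    by (intro continuous_intros \<Phi> continuous_on_Xpow_right[OF \<Phi> nz x0])
  have "volterra (\<lambda>s y. \<Phi> y * Xpow \<Phi> p s y) (Xpow \<Phi> (Suc k)) x0 x
      = of_nat (Suc k) * oint x0 x (\<lambda>t. ?c k * Xpow \<Phi> (p + 1 + k) x0 t * Xpow_weight \<Phi> (Suc k) t)"
    unfolding volterra_Xpow_Suc[where F = "\<lambda>s y. \<Phi> y * Xpow \<Phi> p s y", OF \<Phi> nz F x0 Suc.prems]
  proof (intro arg_cong[where f = "\<lambda>I. of_nat (Suc k) * I"] oint_cong)
    fix t assume "t \<in> {min x0 x..max x0 x}"
    then have "t \<in> {a..b}" using x0 Suc.prems by auto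
    then show "volterra (\<lambda>s y. \<Phi> y * Xpow \<Phi> p s y) (Xpow \<Phi> k) x0 t * Xpow_weight \<Phi> (Suc k) t
             = ?c k * Xpow \<Phi> (p + 1 + k) x0 t * Xpow_weight \<Phi> (Suc k) t"
      by (simp only: Suc.IH)
  qed
  also have "\<dots> = of_nat (Suc k) * ?c k * oint x0 x (\<lambda>t. Xpow \<Phi> (p + 1 + k) x0 t * Xpow_weight \<Phi> (Suc k) t)"
    by (simp add: oint_cmult[symmetric] mult.assoc)
  also have "\<dots> = ?c (Suc k) * Xpow \<Phi> (p + 1 + Suc k) x0 x"
  proof -
    have "Xpow_weight \<Phi> (Suc (p + 1 + k)) = Xpow_weight \<Phi> (Suc k)"
      using p by (simp add: Xpow_weight_def fun_eq_iff)
    moreover have "of_nat (Suc k) * ?c k = ?c (Suc k) * of_nat (Suc (p + 1 + k))"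
      using arg_cong[OF fact_quotient_Suc[of k p], of complex_of_real]
      by (simp only: of_real_mult of_real_of_nat_eq)
    ultimately show ?thesis
      by (simp only: add_Suc_right Xpow_Suc_weight mult.assoc)
  qed
  finally show ?case .
qed

theorem proposition5:
  fixes \<Phi> :: "real \<Rightarrow> complex" and a b x0 x :: real and n m :: nat
  assumes "continuous_on {a..b} \<Phi>"
    and "\<forall>t\<in>{a..b}. \<Phi> t \<noteq> 0"
    and "n \<ge> 1" and "m \<ge> 1"
    and "x0 \<in> {a..b}" and "x \<in> {a..b}"
  defines "A \<equiv> complex_of_real (fact (2*n-1) * fact (2*m) / fact (2*n+2*m))"
    and "B \<equiv> complex_of_real (fact (2*n-1) * fact (2*m-1) / fact (2*n+2*m-1))"
  shows "volterra (\<lambda>s y. \<Phi> y * Xpow \<Phi> (2*n-1) s y) (Xpow \<Phi> (2*m)) x0 x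
           = A * Xpow \<Phi> (2*n+2*m) x0 x
    \<and> volterra (\<lambda>s y. (1 / \<Phi> y) * Xtilde \<Phi> (2*n-1) s y) (Xtilde \<Phi> (2*m)) x0 x
           = A * Xtilde \<Phi> (2*n+2*m) x0 x
    \<and> volterra (\<lambda>s y. \<Phi> y * Xpow \<Phi> (2*n-1) s y) (Xpow \<Phi> (2*m-1)) x0 x
           = B * Xpow \<Phi> (2*n+2*m-1) x0 x
    \<and> volterra (\<lambda>s y. (1 / \<Phi> y) * Xtilde \<Phi> (2*n-1) s y) (Xtilde \<Phi> (2*m-1)) x0 x
           = B * Xtilde \<Phi> (2*n+2*m-1) x0 x"
proof -
  have inv_cont: "continuous_on {a..b} (\<lambda>t. 1 / \<Phi> t)" and inv_nz: "\<forall>t\<in>{a..b}. 1 / \<Phi> t \<noteq> 0"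
    using assms(1,2) by (auto intro!: continuous_intros)
  have odd: "odd (2*n-1)" using assms(3) by presburger
  have even_sum: "2*n-1 + 1 + 2*m = 2*n+2*m" and odd_sum: "2*n-1 + 1 + (2*m-1) = 2*n+2*m-1"
    using assms(3,4) by simp_all
  note X = volterra_weighted_Xpow_Xpow[OF assms(1,2) odd assms(5,6)]
  note Xt = volterra_weighted_Xpow_Xpow[OF inv_cont inv_nz odd assms(5,6)]
  show ?thesis
    unfolding A_def B_def Xtilde_def
    using X[of "2*m"] X[of "2*m-1"] Xt[of "2*m"] Xt[of "2*m-1"]
    unfolding even_sum odd_sum by simp
qed

end
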